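(* There is a constant $C>0$ such that for every positive integer $n$, there is a family $\mathcal{P}_n\subseteq 2^{[n]}$ of subsets of $[n]=\{1,\dots,n\}$ with $|\mathcal{P}_n|\leq 2^{\frac23 n + C\sqrt{n}}$ such that the poset $(\mathcal{P}_n,\subseteq)$ contains every $n$-element poset.
   Context: A poset $(U,\leq)$ contains a poset $(P,\preceq)$ if there is a subset $P'\subseteq U$ such that $(P',\leq)$ (the restriction of $\leq$ to $P'$) is isomorphic to $(P,\preceq)$; i.e. containment is as an induced subposet. $2^{[n]}$ denotes the set of all subsets of $[n]$, ordered by inclusion. *)

theory Defs
  imports Complex_Main
begin

definition is_poset :: "'a set \<Rightarrow> ('a \<Rightarrow> 'a \<Rightarrow> bool) \<Rightarrow> bool" where
  "is_poset A le \<longleftrightarrow>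
     (\<forall>x\<in>A. le x x) \<and>
     (\<forall>x\<in>A. \<forall>y\<in>A. le x y \<and> le y x \<longrightarrow> x = y) \<and>
     (\<forall>x\<in>A. \<forall>y\<in>A. \<forall>z\<in>A. le x y \<and> le y z \<longrightarrow> le x z)"

definition contains_poset :: "'b set set \<Rightarrow> 'a set \<Rightarrow> ('a \<Rightarrow> 'a \<Rightarrow> bool) \<Rightarrow> bool" where
  "contains_poset U A le \<longleftrightarrow>
     (\<exists>f. f ` A \<subseteq> U \<and> inj_on f A \<and> (\<forall>x\<in>A. \<forall>y\<in>A. le x y \<longleftrightarrow> f x \<subseteq> f y))"

end

(*
  A poset with n elements either has an antichain of at least n/3 elements or, by Dilworth's
  theorem, is partitioned into fewer than n/3 chains.

  In the first case the antichain X is encoded by only O(sqrt n) coordinates: its elements get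
  pairwise incomparable 2-element codes in a 2s-element set, s = ceil (sqrt n), while every
  other element costs one coordinate.  This embeds the poset into 2^[k] with
  k <= 2n/3 + 2s.

  In the second case the chains are cut into pieces of at most 9 elements, and the poset embeds
  into the product of the chains [0, |p|] over the pieces p, i.e. into a product of at most
  2^(2n/3) elements; such a product is realised inside 2^[n] by unary codes in consecutive
  blocks.  Only the multiset of piece sizes matters, and there are at most (n+1)^9 of them.

  Together the two families have 2^(2n/3 + O(sqrt n)) members.
*)
theory Submission
  imports Defs "HOL-Library.Multiset" "HOL-Library.Disjoint_Sets"
begin

section \<open>Order embeddings into power sets\<close>

lemma is_posetD:
  assumes "is_poset A le"
  shows is_poset_refl: "x \<in> A \<Longrightarrow> le x x"
    and is_poset_antisym: "x \<in> A \<Longrightarrow> y \<in> A \<Longrightarrow> le x y \<Longrightarrow> le y x \<Longrightarrow> x = y"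
    and is_poset_trans: "x \<in> A \<Longrightarrow> y \<in> A \<Longrightarrow> z \<in> A \<Longrightarrow> le x y \<Longrightarrow> le y z \<Longrightarrow> le x z"
  using assms unfolding is_poset_def by blast+

lemma is_poset_subset: "is_poset A le \<Longrightarrow> B \<subseteq> A \<Longrightarrow> is_poset B le"
  unfolding is_poset_def by (meson subsetD)

lemma contains_poset_mono:
  assumes "contains_poset U A le" "U \<subseteq> V"
  shows "contains_poset V A le"
proof -
  obtain f where "f ` A \<subseteq> U" "inj_on f A" "\<forall>x\<in>A. \<forall>y\<in>A. le x y \<longleftrightarrow> f x \<subseteq> f y"
    using assms(1) unfolding contains_poset_def by blast
  then show ?thesis
    using assms(2) unfolding contains_poset_def by (intro exI[of _ f]) auto
qed

lemma contains_posetI: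
  assumes po: "is_poset A le"
    and into: "\<And>x. x \<in> A \<Longrightarrow> f x \<in> U"
    and embed: "\<And>x y. x \<in> A \<Longrightarrow> y \<in> A \<Longrightarrow> le x y \<longleftrightarrow> f x \<subseteq> f y"
  shows "contains_poset U A le"
  unfolding contains_poset_def
proof (intro exI conjI)
  show "f ` A \<subseteq> U"
    using into by blast
  show "\<forall>x\<in>A. \<forall>y\<in>A. le x y \<longleftrightarrow> f x \<subseteq> f y"
    using embed by simp
  show "inj_on f A"
  proof (rule inj_onI)
    fix x y assume xy: "x \<in> A" "y \<in> A" and "f x = f y"
    then have "le x y" "le y x"
      using embed[OF xy] embed[OF xy(2,1)] by simp_all
    then show "x = y"
      using is_poset_antisym[OF po xy] by blast
  qed
qed

text \<open>An element is sent to the set of indices of the up-sets containing it.\<close>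
lemma contains_poset_Pow_if_separating_upsets:
  assumes po: "is_poset A le" and I: "finite I" "card I \<le> k"
    and up: "\<And>S x y. S \<in> I \<Longrightarrow> x \<in> A \<Longrightarrow> y \<in> A \<Longrightarrow> le x y \<Longrightarrow> x \<in> S \<Longrightarrow> y \<in> S"
    and sep: "\<And>x y. x \<in> A \<Longrightarrow> y \<in> A \<Longrightarrow> \<not> le x y \<Longrightarrow> \<exists>S\<in>I. x \<in> S \<and> y \<notin> S"
  shows "contains_poset (Pow {1..k}) A le"
proof -
  obtain h where h: "bij_betw h {1..card I} I"
    using ex_bij_betw_nat_finite_1[OF I(1)] by blast
  define f where "f x = {i \<in> {1..card I}. x \<in> h i}" for x
  show ?thesis
  proof (rule contains_posetI[OF po, of f])
    show "f x \<in> Pow {1..k}" for x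
      using I(2) unfolding f_def by auto
    fix x y assume xy: "x \<in> A" "y \<in> A"
    have "f x \<subseteq> f y \<longleftrightarrow> (\<forall>S\<in>I. x \<in> S \<longrightarrow> y \<in> S)"
      using bij_betw_imp_surj_on[OF h] unfolding f_def by blast
    also have "\<dots> \<longleftrightarrow> le x y"
    proof
      show "le x y" if "\<forall>S\<in>I. x \<in> S \<longrightarrow> y \<in> S"
        using that sep[OF xy] by blast
      show "\<forall>S\<in>I. x \<in> S \<longrightarrow> y \<in> S" if "le x y"
        using that up[OF _ xy] by blast
    qed
    finally show "le x y \<longleftrightarrow> f x \<subseteq> f y" ..
  qed
qed

lemma contains_poset_Pow_card:
  assumes po: "is_poset A le" and "finite A" "card A \<le> k"
  shows "contains_poset (Pow {1..k}) A le"
proof (rule contains_poset_Pow_if_separating_upsets[OF po])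
  show "card ((\<lambda>z. {x. le z x}) ` A) \<le> k"
    using assms(2,3) card_image_le le_trans by blast
  show "\<exists>S\<in>(\<lambda>z. {x. le z x}) ` A. x \<in> S \<and> y \<notin> S" if "x \<in> A" "\<not> le x y" for x y
    using that is_poset_refl[OF po] by blast
  show "y \<in> S" if "S \<in> (\<lambda>z. {x. le z x}) ` A" "x \<in> A" "y \<in> A" "le x y" "x \<in> S" for S x y
    using that is_poset_trans[OF po] by blast
qed (use assms(2) in simp)

section \<open>Chains, antichains and Dilworth's theorem\<close>

definition antichain_on :: "('a \<Rightarrow> 'a \<Rightarrow> bool) \<Rightarrow> 'a set \<Rightarrow> bool" where
  "antichain_on le X \<longleftrightarrow> (\<forall>x\<in>X. \<forall>y\<in>X. le x y \<longrightarrow> x = y)"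

definition chain_partition :: "('a \<Rightarrow> 'a \<Rightarrow> bool) \<Rightarrow> 'a set \<Rightarrow> 'a set set \<Rightarrow> bool" where
  "chain_partition le A P \<longleftrightarrow> partition_on A P \<and> (\<forall>C\<in>P. Complete_Partial_Order.chain le C)"

lemma card_antichain_le_card_chains:
  assumes "finite P" "Y \<subseteq> \<Union>P" "\<forall>C\<in>P. Complete_Partial_Order.chain le C" "antichain_on le Y"
  shows "card Y \<le> card P"
proof (rule card_le_if_inj_on_rel[where r = "\<lambda>y C. y \<in> C"])
  show "y = y'" if "y \<in> Y" "y' \<in> Y" "C \<in> P" "y \<in> C" "y' \<in> C" for y y' C
    using that assms(3,4) unfolding antichain_on_def by (metis chainD)
qed (use assms(1,2) in blast)+

lemma chain_partition_insert:
  assumes "chain_partition le (A - K) P" "K \<subseteq> A" "K \<noteq> {}" "Complete_Partial_Order.chain le K"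
  shows "chain_partition le A (insert K P)"
proof -
  have "disjnt K (\<Union>P)"
    using assms(1) unfolding chain_partition_def partition_on_def disjnt_def by blast
  then show ?thesis
    using assms unfolding chain_partition_def by (simp add: partition_on_insert)
qed

lemma finite_poset_has_maximal:
  assumes po: "is_poset A le" and S: "finite S" "S \<noteq> {}" "S \<subseteq> A"
  shows "\<exists>m\<in>S. \<forall>b\<in>S. le m b \<longrightarrow> b = m"
  using S
proof (induction S rule: finite_ne_induct)
  case (insert x S)
  then obtain m where m: "m \<in> S" "\<forall>b\<in>S. le m b \<longrightarrow> b = m" by blast
  show ?case
  proof (cases "le m x")
    case True
    have "b = x" if b: "b \<in> S" "le x b" for b
    proof -
      have "x \<in> A" "m \<in> A" "b \<in> A"
        using insert.prems m(1) b(1) by auto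
      then have "le m b"
        using is_poset_trans[OF po] True b(2) by blast
      then have "b = m"
        using m b(1) by blast
      then show "b = x"
        using is_poset_antisym[OF po \<open>x \<in> A\<close> \<open>m \<in> A\<close>] True b(2) by blast
    qed
    then show ?thesis by blast
  next
    case False
    then show ?thesis using m by blast
  qed
qed simp

lemma finite_chain_has_greatest:
  assumes po: "is_poset A le" and S: "finite S" "S \<noteq> {}" "S \<subseteq> A"
    and chain: "Complete_Partial_Order.chain le S"
  shows "\<exists>m\<in>S. \<forall>y\<in>S. le y m"
proof -
  obtain m where m: "m \<in> S" "\<forall>b\<in>S. le m b \<longrightarrow> b = m"
    using finite_poset_has_maximal[OF po S] by blast
  have "le y m" if "y \<in> S" for y
  proof (cases "y = m")
    case True
    then show ?thesis using is_poset_refl[OF po] S(3) that by blast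
  next
    case False
    then show ?thesis using chainD[OF chain that m(1)] m(2) that by blast
  qed
  then show ?thesis using m(1) by blast
qed

lemma antichain_meets_chain_partition:
  assumes P: "chain_partition le A P" and fin: "finite A"
    and Y: "Y \<subseteq> A" "antichain_on le Y" "card Y = card P" and C: "C \<in> P"
  shows "Y \<inter> C \<noteq> {}"
proof
  assume "Y \<inter> C = {}"
  have finP: "finite P"
    using P fin finite_elements unfolding chain_partition_def by blast
  have "Y \<subseteq> \<Union>(P - {C})"
    using Y(1) \<open>Y \<inter> C = {}\<close> P unfolding chain_partition_def partition_on_def by blast
  then have "card Y \<le> card (P - {C})"
    using P finP Y(2) unfolding chain_partition_def by (intro card_antichain_le_card_chains) auto
  also have "\<dots> < card P"
    using finP C by (rule card_Diff1_less)
  finally show False using Y(3) by simp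
qed

lemma chain_partition_antichain_tops:
  assumes po: "is_poset A le" and fin: "finite A" and P: "chain_partition le A P"
    and X: "X \<subseteq> A" "antichain_on le X" "card X = card P"
  obtains t where "\<And>C. C \<in> P \<Longrightarrow> t C \<in> C"
    and "\<And>C Y y. C \<in> P \<Longrightarrow> Y \<subseteq> A \<Longrightarrow> antichain_on le Y \<Longrightarrow> card Y = card P \<Longrightarrow>
           y \<in> Y \<Longrightarrow> y \<in> C \<Longrightarrow> le y (t C)"
    and "antichain_on le (t ` P)" "card (t ` P) = card P"
proof -
  define M where "M C = {y\<in>C. \<exists>Y\<subseteq>A. antichain_on le Y \<and> card Y = card P \<and> y \<in> Y}" for C
  have CA: "C \<subseteq> A" if "C \<in> P" for C
    using P that unfolding chain_partition_def partition_on_def by blast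
  have "\<exists>m\<in>M C. \<forall>y\<in>M C. le y m" if C: "C \<in> P" for C
  proof (rule finite_chain_has_greatest[OF po])
    show "M C \<subseteq> A"
      unfolding M_def using CA[OF C] by blast
    then show "finite (M C)"
      using fin finite_subset by blast
    show "M C \<noteq> {}"
      using antichain_meets_chain_partition[OF P fin X C] X unfolding M_def by blast
    show "Complete_Partial_Order.chain le (M C)"
      using P C unfolding chain_partition_def M_def by (blast intro: chain_subset)
  qed
  then obtain t where t: "\<And>C. C \<in> P \<Longrightarrow> t C \<in> M C \<and> (\<forall>y\<in>M C. le y (t C))"
    by metis
  have tC: "t C \<in> C" if "C \<in> P" for C
    using t[OF that] unfolding M_def by blast
  have same_chain: "C = D" if "C \<in> P" "D \<in> P" "x \<in> C" "x \<in> D" for C D x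
    using P that unfolding chain_partition_def partition_on_def disjoint_def by blast
  show ?thesis
  proof
    show "le y (t C)" if "C \<in> P" "Y \<subseteq> A" "antichain_on le Y" "card Y = card P"
      "y \<in> Y" "y \<in> C" for C Y y
      using that t unfolding M_def by blast
    show "antichain_on le (t ` P)"
      unfolding antichain_on_def
    proof (intro ballI impI)
      fix u v assume "u \<in> t ` P" "v \<in> t ` P" "le u v"
      then obtain C D where C: "C \<in> P" "u = t C" and D: "D \<in> P" "v = t D" by blast
      obtain Y where Y: "Y \<subseteq> A" "antichain_on le Y" "card Y = card P" "t D \<in> Y"
        using t[OF D(1)] unfolding M_def by blast
      obtain y where y: "y \<in> Y" "y \<in> C"
        using antichain_meets_chain_partition[OF P fin Y(1-3) C(1)] by blast
      have "le y (t C)"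
        using t[OF C(1)] y Y unfolding M_def by blast
      then have "le y (t D)"
        using \<open>le u v\<close> C D y Y(1) CA tC is_poset_trans[OF po] by blast
      then have "y = t D"
        using Y y unfolding antichain_on_def by blast
      then show "u = v"
        using same_chain[OF C(1) D(1) y(2)] tC[OF D(1)] C D by simp
    qed
    have "inj_on t P"
      by (rule inj_onI) (use same_chain tC in metis)
    then show "card (t ` P) = card P"
      by (rule card_image)
  qed (rule tC)
qed

lemma chain_insert_upper_bound:
  assumes "Complete_Partial_Order.chain le C" "\<And>z. z \<in> C \<Longrightarrow> le z a" "le a a"
  shows "Complete_Partial_Order.chain le (insert a C)"
  using assms unfolding chain_def by blast

lemma antichain_avoiding_lower_part_smaller:
  assumes P: "chain_partition le A P" and fin: "finite A" and C: "C \<in> P"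
    and top: "\<And>Y y. Y \<subseteq> A \<Longrightarrow> antichain_on le Y \<Longrightarrow> card Y = card P \<Longrightarrow> y \<in> Y \<Longrightarrow> y \<in> C \<Longrightarrow> le y t"
    and Y: "Y \<subseteq> A - {z\<in>C. le z t}" "antichain_on le Y"
  shows "card Y < card P"
proof -
  have finP: "finite P"
    using P fin finite_elements unfolding chain_partition_def by blast
  have "card Y \<le> card P"
    using P finP Y unfolding chain_partition_def partition_on_def
    by (intro card_antichain_le_card_chains) auto
  moreover have "card Y \<noteq> card P"
  proof
    assume "card Y = card P"
    moreover have "Y \<subseteq> A"
      using Y(1) by blast
    ultimately obtain y where "y \<in> Y" "y \<in> C"
      using antichain_meets_chain_partition[OF P fin _ Y(2) _ C] by blast
    then show False
      using top[OF \<open>Y \<subseteq> A\<close> Y(2) \<open>card Y = card P\<close>] Y(1) by blast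
  qed
  ultimately show ?thesis
    by simp
qed

lemma dilworth_insert_maximal:
  assumes po: "is_poset A le" and fin: "finite A"
    and a: "a \<in> A" "\<And>b. b \<in> A \<Longrightarrow> le a b \<Longrightarrow> b = a"
    and P: "chain_partition le (A - {a}) P"
    and T: "T \<subseteq> A - {a}" "antichain_on le T" "card T = card P" "\<And>t. t \<in> T \<Longrightarrow> \<not> le t a"
  shows "chain_partition le A (insert {a} P) \<and> antichain_on le (insert a T)
    \<and> card (insert {a} P) \<le> card (insert a T)"
proof (intro conjI)
  show "chain_partition le A (insert {a} P)"
    using P a(1) by (intro chain_partition_insert) (auto simp: chain_def is_poset_refl[OF po])
  show "antichain_on le (insert a T)"
    using T(1,2,4) a unfolding antichain_on_def by blast
  have "finite P"
    using P fin finite_elements unfolding chain_partition_def by blast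
  then have "card (insert {a} P) \<le> Suc (card P)"
    by (simp add: card_insert_if)
  also have "\<dots> = card (insert a T)"
  proof -
    have "a \<notin> T" "finite T"
      using T(1) finite_subset[OF T(1)] fin by auto
    then show ?thesis
      using T(3) by simp
  qed
  finally show "card (insert {a} P) \<le> card (insert a T)" .
qed

lemma dilworth_remove_lower_chain:
  assumes po: "is_poset A le" and fin: "finite A" and a: "a \<in> A"
    and P: "chain_partition le (A - {a}) P" and C: "C \<in> P" "t \<in> C" "le t a"
    and top: "\<And>Y y. Y \<subseteq> A - {a} \<Longrightarrow> antichain_on le Y \<Longrightarrow> card Y = card P \<Longrightarrow>
      y \<in> Y \<Longrightarrow> y \<in> C \<Longrightarrow> le y t"
    and rest: "chain_partition le (A - insert a {z\<in>C. le z t}) P''"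
      "X'' \<subseteq> A - insert a {z\<in>C. le z t}" "antichain_on le X''" "card P'' \<le> card X''"
  shows "chain_partition le A (insert (insert a {z\<in>C. le z t}) P'')
    \<and> card (insert (insert a {z\<in>C. le z t}) P'') \<le> card P"
proof
  define K where "K = insert a {z\<in>C. le z t}"
  have CA: "C \<subseteq> A"
    using P C(1) unfolding chain_partition_def partition_on_def by blast
  have tA: "t \<in> A"
    using CA C(2) by blast
  have "Complete_Partial_Order.chain le K"
    unfolding K_def
  proof (rule chain_insert_upper_bound)
    have "Complete_Partial_Order.chain le C"
      using P C(1) unfolding chain_partition_def by blast
    then show "Complete_Partial_Order.chain le {z\<in>C. le z t}"
      by (rule chain_subset) blast
    show "le z a" if z: "z \<in> {z\<in>C. le z t}" for z
    proof -
      have "z \<in> A" "le z t"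
        using z CA by auto
      then show ?thesis
        using is_poset_trans[OF po _ tA a _ C(3)] by blast
    qed
    show "le a a"
      by (rule is_poset_refl[OF po a])
  qed
  then show "chain_partition le A (insert K P'')"
    using chain_partition_insert[OF rest(1)[folded K_def]] a CA unfolding K_def by blast
  have "finite P''"
    using rest(1) fin finite_elements unfolding chain_partition_def by blast
  then have "card (insert K P'') \<le> Suc (card P'')"
    by (simp add: card_insert_if)
  moreover have "card X'' < card P"
  proof (rule antichain_avoiding_lower_part_smaller[OF P _ C(1) top _ rest(3)])
    show "finite (A - {a})"
      using fin by simp
    show "X'' \<subseteq> A - {a} - {z\<in>C. le z t}"
      using rest(2) by blast
  qed
  ultimately show "card (insert K P'') \<le> card P"
    using rest(4) by linarith
qed

text \<open>Galvin's proof: remove a maximal element \<open>a\<close> and take the tops \<open>t C\<close> of the chains of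
  \<open>A - {a}\<close>.  If no top lies below \<open>a\<close>, they form together with \<open>a\<close> an antichain as large as
  the new partition; otherwise removing the chain \<open>{a} \<union> {z \<in> C. z \<le> t C}\<close> lowers the width.\<close>
theorem dilworth:
  assumes "finite A" "is_poset A le"
  shows "\<exists>P X. chain_partition le A P \<and> X \<subseteq> A \<and> antichain_on le X \<and> card P \<le> card X"
  using assms
proof (induction "card A" arbitrary: A rule: less_induct)
  case less
  note fin = less.prems(1) and po = less.prems(2)
  show ?case
  proof (cases "A = {}")
    case True
    then show ?thesis
      unfolding chain_partition_def antichain_on_def
      by (intro exI[of _ "{}"]) (auto simp: partition_on_empty)
  next
    case False
    obtain a where a: "a \<in> A" and a_max: "\<And>b. b \<in> A \<Longrightarrow> le a b \<Longrightarrow> b = a"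
      using finite_poset_has_maximal[OF po fin False] by blast
    define A' where "A' = A - {a}"
    have fin': "finite A'" and po': "is_poset A' le"
      unfolding A'_def using fin is_poset_subset[OF po] by auto
    obtain P' X' where P': "chain_partition le A' P'"
      and X': "X' \<subseteq> A'" "antichain_on le X'" "card P' \<le> card X'"
      using less.hyps[of A'] fin' po' card_Diff1_less[OF fin a] unfolding A'_def by blast
    have "card X' \<le> card P'"
      using P' X'(1,2) fin' finite_elements unfolding chain_partition_def partition_on_def
      by (intro card_antichain_le_card_chains) auto
    then have X'_card: "card X' = card P'"
      using X'(3) by simp
    obtain t where t_in: "\<And>C. C \<in> P' \<Longrightarrow> t C \<in> C"
      and t_top: "\<And>C Y y. C \<in> P' \<Longrightarrow> Y \<subseteq> A' \<Longrightarrow> antichain_on le Y \<Longrightarrow> card Y = card P' \<Longrightarrow>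
           y \<in> Y \<Longrightarrow> y \<in> C \<Longrightarrow> le y (t C)"
      and T: "antichain_on le (t ` P')" "card (t ` P') = card P'"
      using chain_partition_antichain_tops[OF po' fin' P' X'(1,2) X'_card] by blast
    have tA': "t ` P' \<subseteq> A'"
      using t_in P' unfolding chain_partition_def partition_on_def by blast
    show ?thesis
    proof (cases "\<exists>C\<in>P'. le (t C) a")
      case False
      then have "\<not> le u a" if "u \<in> t ` P'" for u
        using that by blast
      then have "chain_partition le A (insert {a} P') \<and> antichain_on le (insert a (t ` P'))
          \<and> card (insert {a} P') \<le> card (insert a (t ` P'))"
        using dilworth_insert_maximal[OF po fin a a_max P'[unfolded A'_def] tA'[unfolded A'_def] T]
        by blast
      moreover have "insert a (t ` P') \<subseteq> A"
        using a tA' unfolding A'_def by blast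
      ultimately show ?thesis
        by blast
    next
      case True
      then obtain C where C: "C \<in> P'" "le (t C) a" by blast
      define K where "K = insert a {z\<in>C. le z (t C)}"
      have "card (A - K) < card A"
        using fin a unfolding K_def by (intro psubset_card_mono) auto
      then obtain P'' X'' where P'': "chain_partition le (A - K) P''"
        and X'': "X'' \<subseteq> A - K" "antichain_on le X''" "card P'' \<le> card X''"
        using less.hyps[of "A - K"] fin is_poset_subset[OF po, of "A - K"] by blast
      have "chain_partition le A (insert K P'') \<and> card (insert K P'') \<le> card P'"
        unfolding K_def
        by (rule dilworth_remove_lower_chain[OF po fin a P'[unfolded A'_def] C(1) t_in[OF C(1)] C(2)
              t_top[OF C(1), unfolded A'_def] P''[unfolded K_def] X''[unfolded K_def]])
      then have "chain_partition le A (insert K P'') \<and> card (insert K P'') \<le> card X'"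
        using X'_card by simp
      moreover have "X' \<subseteq> A"
        using X'(1) unfolding A'_def by blast
      ultimately show ?thesis
        using X'(2) by blast
    qed
  qed
qed

section \<open>Posets with a large antichain\<close>

text \<open>Encoding the antichain \<open>X\<close> by the codes costs only \<open>|E|\<close> coordinates instead of \<open>|X|\<close>.\<close>
locale antichain_coding =
  fixes A :: "'a set" and le :: "'a \<Rightarrow> 'a \<Rightarrow> bool" and X :: "'a set"
    and E :: "'b set" and code :: "'a \<Rightarrow> 'b set"
  assumes po: "is_poset A le" and fin: "finite A"
    and X_sub: "X \<subseteq> A" and X_antichain: "antichain_on le X"
    and E_fin: "finite E"
    and code_ne: "\<And>x. x \<in> X \<Longrightarrow> code x \<noteq> {}"
    and code_sub: "\<And>x. x \<in> X \<Longrightarrow> code x \<subset> E"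
    and code_antichain: "\<And>x y. x \<in> X \<Longrightarrow> y \<in> X \<Longrightarrow> code x \<subseteq> code y \<Longrightarrow> x = y"
begin

definition above :: "'a set" where
  "above = {z \<in> A - X. \<exists>a\<in>X. le a z}"

definition vertex_upset :: "'a \<Rightarrow> 'a set" where
  "vertex_upset z = (if z \<in> above then {x\<in>A. \<not> le x z} else {x\<in>A. le z x})"

definition code_upset :: "'b \<Rightarrow> 'a set" where
  "code_upset e = above \<union> {x\<in>X. e \<in> code x}"

definition upsets :: "'a set set" where
  "upsets = vertex_upset ` (A - X) \<union> code_upset ` E"

lemma X_above_subset: "X \<union> above \<subseteq> A"
  using X_sub unfolding above_def by blast

lemma ex_below_in_X: "x \<in> X \<union> above \<Longrightarrow> \<exists>a\<in>X. le a x"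
  using is_poset_refl[OF po] X_sub unfolding above_def by blast

lemma X_above_up_closed:
  assumes x: "x \<in> X \<union> above" and y: "y \<in> A" "le x y"
  shows "y \<in> above \<or> (x \<in> X \<and> y = x)"
proof -
  have xA: "x \<in> A"
    using x X_above_subset by blast
  obtain a where a: "a \<in> X" "le a x"
    using ex_below_in_X[OF x] by blast
  have "le a y"
    using is_poset_trans[OF po _ xA y(1) a(2) y(2)] a(1) X_sub by blast
  show ?thesis
  proof (cases "y \<in> X")
    case True
    then have "a = y"
      using X_antichain a(1) \<open>le a y\<close> unfolding antichain_on_def by blast
    then have "x = y"
      using is_poset_antisym[OF po xA y(1) y(2)] a(2) by blast
    then show ?thesis
      using True by blast
  next
    case False
    then show ?thesis
      using y(1) a(1) \<open>le a y\<close> unfolding above_def by blast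
  qed
qed

lemma finite_upsets: "finite upsets"
  unfolding upsets_def using fin E_fin by simp

lemma card_upsets: "card upsets \<le> card A - card X + card E"
proof -
  have "card upsets \<le> card (vertex_upset ` (A - X)) + card (code_upset ` E)"
    unfolding upsets_def by (rule card_Un_le)
  also have "\<dots> \<le> card (A - X) + card E"
    using fin E_fin by (intro add_mono card_image_le) auto
  finally show ?thesis
    using card_Diff_subset[OF finite_subset[OF X_sub fin] X_sub] by simp
qed

lemma upsets_up_closed:
  assumes S: "S \<in> upsets" and xy: "x \<in> A" "y \<in> A" "le x y" and "x \<in> S"
  shows "y \<in> S"
proof (cases "S \<in> code_upset ` E")
  case True
  then obtain e where S_eq: "S = code_upset e" by blast
  then have "x \<in> X \<union> above"
    using \<open>x \<in> S\<close> unfolding code_upset_def by blast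
  then have "y \<in> above \<or> (x \<in> X \<and> y = x)"
    using X_above_up_closed xy(2,3) by blast
  then show ?thesis
    using \<open>x \<in> S\<close> unfolding S_eq code_upset_def by blast
next
  case False
  then obtain z where z: "z \<in> A" "S = vertex_upset z"
    using S unfolding upsets_def by blast
  show ?thesis
  proof (cases "z \<in> above")
    case True
    then have "\<not> le x z"
      using \<open>x \<in> S\<close> unfolding z(2) vertex_upset_def by simp
    then have "\<not> le y z"
      using is_poset_trans[OF po xy(1,2) z(1) xy(3)] by blast
    then show ?thesis
      using True xy(2) unfolding z(2) vertex_upset_def by simp
  next
    case False
    then have "le z x"
      using \<open>x \<in> S\<close> unfolding z(2) vertex_upset_def by simp
    then have "le z y"
      using is_poset_trans[OF po z(1) xy(1,2) _ xy(3)] by blast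
    then show ?thesis
      using False xy(2) unfolding z(2) vertex_upset_def by simp
  qed
qed

lemma code_upset_separates:
  assumes x: "x \<in> X \<union> above" and y: "y \<in> A" "y \<notin> above" and "\<not> le x y"
  shows "\<exists>e\<in>E. x \<in> code_upset e \<and> y \<notin> code_upset e"
proof -
  have "\<exists>e\<in>E. (x \<in> X \<longrightarrow> e \<in> code x) \<and> (y \<in> X \<longrightarrow> e \<notin> code y)"
  proof (cases "x \<in> X")
    case x_X: True
    show ?thesis
    proof (cases "y \<in> X")
      case True
      have "x \<noteq> y"
        using \<open>\<not> le x y\<close> is_poset_refl[OF po, of x] X_sub x_X by auto
      then have "\<not> code x \<subseteq> code y"
        using code_antichain[OF x_X True] by blast
      then obtain e where "e \<in> code x" "e \<notin> code y"
        by blast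
      then show ?thesis
        using code_sub[OF x_X] by blast
    next
      case False
      obtain e where "e \<in> code x"
        using code_ne[OF x_X] by blast
      then show ?thesis
        using code_sub[OF x_X] False by blast
    qed
  next
    case x_not_X: False
    show ?thesis
    proof (cases "y \<in> X")
      case True
      obtain e where "e \<in> E - code y"
        using psubset_imp_ex_mem[OF code_sub[OF True]] by blast
      then show ?thesis
        using x_not_X by blast
    next
      case False
      obtain a where "a \<in> X"
        using ex_below_in_X[OF x] by blast
      obtain e where "e \<in> E - code a"
        using psubset_imp_ex_mem[OF code_sub[OF \<open>a \<in> X\<close>]] by blast
      then show ?thesis
        using x_not_X False by blast
    qed
  qed
  then obtain e where "e \<in> E" "x \<in> X \<longrightarrow> e \<in> code x" "y \<in> X \<longrightarrow> e \<notin> code y"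
    by blast
  moreover have "x \<in> code_upset e"
    using x \<open>x \<in> X \<longrightarrow> e \<in> code x\<close> unfolding code_upset_def by blast
  moreover have "y \<notin> code_upset e"
    using y(2) \<open>y \<in> X \<longrightarrow> e \<notin> code y\<close> unfolding code_upset_def by blast
  ultimately show ?thesis
    by blast
qed

lemma upsets_separate:
  assumes xy: "x \<in> A" "y \<in> A" "\<not> le x y"
  shows "\<exists>S\<in>upsets. x \<in> S \<and> y \<notin> S"
proof (cases "x \<in> X \<union> above \<and> y \<notin> above")
  case True
  then obtain e where "e \<in> E" "x \<in> code_upset e" "y \<notin> code_upset e"
    using code_upset_separates xy(2,3) by blast
  moreover have "code_upset e \<in> upsets"
    using \<open>e \<in> E\<close> unfolding upsets_def by blast
  ultimately show ?thesis
    by blast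
next
  case False
  then consider "x \<in> A - X" "x \<notin> above" | "y \<in> above"
    using xy(1) by blast
  then show ?thesis
  proof cases
    case 1
    then have "vertex_upset x \<in> upsets"
      unfolding upsets_def by blast
    moreover have "vertex_upset x = {w\<in>A. le x w}"
      using 1(2) unfolding vertex_upset_def by simp
    ultimately show ?thesis
      using xy is_poset_refl[OF po xy(1)] by blast
  next
    case 2
    then have "y \<in> A - X"
      unfolding above_def by blast
    then have "vertex_upset y \<in> upsets"
      unfolding upsets_def by blast
    moreover have "vertex_upset y = {w\<in>A. \<not> le w y}"
      using 2 unfolding vertex_upset_def by simp
    ultimately show ?thesis
      using xy is_poset_refl[OF po xy(2)] by blast
  qed
qed

lemma contains_poset_Pow: "contains_poset (Pow {1..card A - card X + card E}) A le"
proof (rule contains_poset_Pow_if_separating_upsets[OF po finite_upsets card_upsets])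
  show "y \<in> S" if "S \<in> upsets" "x \<in> A" "y \<in> A" "le x y" "x \<in> S" for S x y
    using upsets_up_closed[OF that] .
  show "\<exists>S\<in>upsets. x \<in> S \<and> y \<notin> S" if "x \<in> A" "y \<in> A" "\<not> le x y" for x y
    using upsets_separate[OF that] .
qed

end

text \<open>Code \<open>x\<close> by its position \<open>(i, j)\<close> in an \<open>s \<times> s\<close> grid as \<open>{i, s + j}\<close>.\<close>
lemma grid_code:
  assumes "finite X" "card X \<le> s * s" "2 \<le> s"
  obtains code :: "'a \<Rightarrow> nat set"
  where "\<And>x. x \<in> X \<Longrightarrow> code x \<noteq> {}" "\<And>x. x \<in> X \<Longrightarrow> code x \<subset> {..<2 * s}"
    and "\<And>x y. x \<in> X \<Longrightarrow> y \<in> X \<Longrightarrow> code x \<subseteq> code y \<Longrightarrow> x = y"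
proof -
  obtain idx where idx: "bij_betw idx X {0..<card X}"
    using ex_bij_betw_finite_nat[OF assms(1)] by blast
  have idx_lt: "idx x < s * s" if "x \<in> X" for x
  proof -
    have "idx x < card X"
      using bij_betwE[OF idx] that by simp
    then show ?thesis
      using assms(2) by linarith
  qed
  define code where "code x = {idx x div s, s + idx x mod s}" for x
  show ?thesis
  proof (rule that)
    show "code x \<noteq> {}" for x
      unfolding code_def by simp
    show "code x \<subset> {..<2 * s}" if "x \<in> X" for x
    proof
      have "idx x div s < s" "idx x mod s < s"
        using idx_lt[OF that] assms(3) by (simp_all add: less_mult_imp_div_less)
      then show "code x \<subseteq> {..<2 * s}"
        unfolding code_def by simp
      have "card (code x) \<le> 2"
        unfolding code_def by (simp add: card_insert_if)
      moreover have "card {..<2 * s} > 2"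
        using assms(3) by simp
      ultimately show "code x \<noteq> {..<2 * s}"
        by (metis not_le)
    qed
    show "x = y" if "x \<in> X" "y \<in> X" "code x \<subseteq> code y" for x y
    proof -
      have "idx x div s < s" "idx y div s < s"
        using idx_lt[OF that(1)] idx_lt[OF that(2)] by (simp_all add: less_mult_imp_div_less)
      moreover have "idx x div s \<in> code y" "s + idx x mod s \<in> code y"
        using that(3) unfolding code_def by auto
      ultimately have "idx x div s = idx y div s" "idx x mod s = idx y mod s"
        unfolding code_def by auto
      then have "idx x = idx y"
        by (metis div_mult_mod_eq)
      then show "x = y"
        using bij_betw_imp_inj_on[OF idx] that(1,2) by (simp add: inj_on_eq_iff)
    qed
  qed
qed

lemma contains_poset_Pow_large_antichain:
  assumes po: "is_poset A le" and fin: "finite A" and X: "X \<subseteq> A" "antichain_on le X"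
    and s: "card X \<le> s * s" "2 \<le> s"
  shows "contains_poset (Pow {1..card A - card X + 2 * s}) A le"
proof -
  obtain code :: "'a \<Rightarrow> nat set" where code: "\<And>x. x \<in> X \<Longrightarrow> code x \<noteq> {}"
    "\<And>x. x \<in> X \<Longrightarrow> code x \<subset> {..<2 * s}"
    "\<And>x y. x \<in> X \<Longrightarrow> y \<in> X \<Longrightarrow> code x \<subseteq> code y \<Longrightarrow> x = y"
    using grid_code[OF finite_subset[OF X(1) fin] s] by metis
  interpret antichain_coding A le X "{..<2 * s}" code
    using po fin X code by unfold_locales auto
  show ?thesis
    using contains_poset_Pow by simp
qed

section \<open>Posets covered by few chains\<close>

lemma small_piece_bound: "1 \<le> c \<Longrightarrow> c \<le> 9 \<Longrightarrow> (c + 1 :: nat) ^ 8 \<le> 2 ^ (3 * c + 7)"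
proof -
  assume "1 \<le> c" "c \<le> 9"
  then have "c \<in> {1..9}" by simp
  also have "{1..9} = {1, 2, 3, 4, 5, 6, 7, 8, 9 :: nat}" by auto
  finally show ?thesis by (auto simp del: One_nat_def)
qed

text \<open>Cutting off full pieces of size 9 is cheap because \<open>10 ^ 8 \<le> 2 ^ (3 * 9)\<close>; the last piece
  of size \<open>c \<le> 9\<close> costs the additive \<open>7\<close>.\<close>
lemma partition_into_small_pieces:
  assumes "finite C"
  shows "\<exists>Q. partition_on C Q \<and> (\<forall>q\<in>Q. card q \<le> 9)
           \<and> (\<Prod>q\<in>Q. card q + 1) ^ 8 \<le> (2::nat) ^ (3 * card C + 7)"
  using assms
proof (induction "card C" arbitrary: C rule: less_induct)
  case less
  show ?case
  proof (cases "card C \<le> 9")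
    case True
    show ?thesis
    proof (cases "C = {}")
      case True
      then show ?thesis by (intro exI[of _ "{}"]) (simp add: partition_on_empty)
    next
      case False
      then have "1 \<le> card C"
        using less.prems by (simp add: Suc_le_eq card_gt_0_iff)
      then have "(card C + 1) ^ 8 \<le> (2::nat) ^ (3 * card C + 7)"
        using small_piece_bound \<open>card C \<le> 9\<close> by blast
      then show ?thesis
        using False True by (intro exI[of _ "{C}"]) (simp add: partition_on_space)
    qed
  next
    case False
    obtain B where B: "B \<subseteq> C" "card B = 9"
      using obtain_subset_with_card_n[of 9 C] False by force
    have B_ne: "B \<noteq> {}"
      using B(2) by auto
    have card_rest: "card (C - B) = card C - 9"
      using B less.prems by (simp add: card_Diff_subset finite_subset)
    then obtain Q where Q: "partition_on (C - B) Q" "\<forall>q\<in>Q. card q \<le> 9"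
        "(\<Prod>q\<in>Q. card q + 1) ^ 8 \<le> (2::nat) ^ (3 * card (C - B) + 7)"
      using less.hyps[of "C - B"] less.prems False by auto
    have finQ: "finite Q"
      using Q(1) less.prems finite_elements by blast
    have B_notin: "B \<notin> Q"
      using Q(1) B_ne unfolding partition_on_def by blast
    have "disjnt B (\<Union>Q)"
      using Q(1) unfolding partition_on_def disjnt_def by blast
    then have "partition_on C (insert B Q)"
      using Q(1) B(1) B_ne by (simp add: partition_on_insert)
    moreover have "(\<Prod>q\<in>insert B Q. card q + 1) ^ 8 \<le> (2::nat) ^ (3 * card C + 7)"
    proof -
      have "(\<Prod>q\<in>insert B Q. card q + 1) ^ 8 = 10 ^ 8 * (\<Prod>q\<in>Q. card q + 1) ^ 8"
        using finQ B_notin B(2) by (simp add: power_mult_distrib)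
      also have "\<dots> \<le> 2 ^ 27 * 2 ^ (3 * card (C - B) + 7)"
        using Q(3) by (intro mult_mono) auto
      also have "\<dots> = (2::nat) ^ (3 * card C + 7)"
      proof -
        have "3 * card C + 7 = 27 + (3 * card (C - B) + 7)"
          using card_rest False by simp
        then show ?thesis
          by (simp only: power_add)
      qed
      finally show ?thesis .
    qed
    ultimately show ?thesis
      using Q(2) B(2) by (intro exI[of _ "insert B Q"]) auto
  qed
qed

lemma partition_on_UN_refine:
  assumes P: "partition_on A P" and F: "\<And>C. C \<in> P \<Longrightarrow> partition_on C (F C)"
  shows "partition_on A (\<Union>C\<in>P. F C)"
    and "C \<in> P \<Longrightarrow> D \<in> P \<Longrightarrow> C \<noteq> D \<Longrightarrow> F C \<inter> F D = {}"
proof -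
  have piece_sub: "q \<subseteq> C" "q \<noteq> {}" if "C \<in> P" "q \<in> F C" for C q
    using F[OF that(1)] that(2) unfolding partition_on_def by blast+
  have disjP: "C \<inter> D = {}" if "C \<in> P" "D \<in> P" "C \<noteq> D" for C D
    using partition_onD2[OF P] that unfolding disjoint_def by blast
  show "F C \<inter> F D = {}" if "C \<in> P" "D \<in> P" "C \<noteq> D" for C D
    using disjP[OF that] piece_sub that(1,2) by blast
  show "partition_on A (\<Union>C\<in>P. F C)"
  proof (rule partition_onI)
    have "\<Union>(\<Union>C\<in>P. F C) = (\<Union>C\<in>P. \<Union>(F C))"
      by blast
    also have "\<dots> = \<Union>P"
      using partition_onD1[OF F] by simp
    finally show "\<Union>(\<Union>C\<in>P. F C) = A"
      using partition_onD1[OF P] by simp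
    show "{} \<notin> (\<Union>C\<in>P. F C)"
      using piece_sub by blast
    show "disjnt p q" if pq: "p \<in> (\<Union>C\<in>P. F C)" "q \<in> (\<Union>C\<in>P. F C)" "p \<noteq> q" for p q
    proof -
      obtain C D where C: "C \<in> P" "p \<in> F C" and D: "D \<in> P" "q \<in> F D"
        using pq(1,2) by blast
      show ?thesis
      proof (cases "C = D")
        case True
        then show ?thesis
          using partition_onD2[OF F[OF C(1)]] C(2) D(2) pq(3) unfolding pairwise_def by blast
      next
        case False
        then show ?thesis
          using disjP[OF C(1) D(1)] piece_sub[OF C] piece_sub[OF D] unfolding disjnt_def by blast
      qed
    qed
  qed
qed

lemma refine_chain_partition:
  assumes P: "chain_partition le A P" and fin: "finite A"
  shows "\<exists>Q. chain_partition le A Q \<and> (\<forall>q\<in>Q. card q \<le> 9)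
           \<and> (\<Prod>q\<in>Q. card q + 1) ^ 8 \<le> (2::nat) ^ (3 * card A + 7 * card P)"
proof -
  have part: "partition_on A P" and chains: "\<And>C. C \<in> P \<Longrightarrow> Complete_Partial_Order.chain le C"
    using P unfolding chain_partition_def by auto
  have finP: "finite P"
    using finite_elements[OF fin part] .
  have finC: "finite C" if "C \<in> P" for C
    using part fin that unfolding partition_on_def by (meson Union_upper finite_subset)
  obtain pieces where pieces: "\<And>C. C \<in> P \<Longrightarrow> partition_on C (pieces C) \<and> (\<forall>q\<in>pieces C. card q \<le> 9)
      \<and> (\<Prod>q\<in>pieces C. card q + 1) ^ 8 \<le> (2::nat) ^ (3 * card C + 7)"
    using partition_into_small_pieces[OF finC] by metis
  have pieces_part: "partition_on C (pieces C)"
    and pieces_small: "\<And>q. q \<in> pieces C \<Longrightarrow> card q \<le> 9"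
    and pieces_prod: "(\<Prod>q\<in>pieces C. card q + 1) ^ 8 \<le> (2::nat) ^ (3 * card C + 7)"
    if "C \<in> P" for C
    using pieces[OF that] by blast+
  define Q where "Q = (\<Union>C\<in>P. pieces C)"
  have "chain_partition le A Q"
    unfolding chain_partition_def
  proof
    show "partition_on A Q"
      unfolding Q_def by (rule partition_on_UN_refine(1)[OF part pieces_part])
    show "\<forall>q\<in>Q. Complete_Partial_Order.chain le q"
      using chain_subset chains pieces_part unfolding Q_def partition_on_def by blast
  qed
  moreover have "\<forall>q\<in>Q. card q \<le> 9"
    using pieces_small unfolding Q_def by blast
  moreover have "(\<Prod>q\<in>Q. card q + 1) ^ 8 \<le> (2::nat) ^ (3 * card A + 7 * card P)"
  proof -
    have "(\<Prod>q\<in>Q. card q + 1) = (\<Prod>C\<in>P. \<Prod>q\<in>pieces C. card q + 1)"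
      unfolding Q_def
    proof (rule prod.UNION_disjoint[OF finP]; intro ballI impI)
      show "finite (pieces C)" if "C \<in> P" for C
        using finite_elements[OF finC[OF that] pieces_part[OF that]] .
      show "pieces C \<inter> pieces D = {}" if "C \<in> P" "D \<in> P" "C \<noteq> D" for C D
        by (rule partition_on_UN_refine(2)[OF part pieces_part that])
    qed
    then have "(\<Prod>q\<in>Q. card q + 1) ^ 8 = (\<Prod>C\<in>P. (\<Prod>q\<in>pieces C. card q + 1) ^ 8)"
      by (simp add: prod_power_distrib)
    also have "\<dots> \<le> (\<Prod>C\<in>P. (2::nat) ^ (3 * card C + 7))"
      using pieces_prod by (intro prod_mono) auto
    also have "\<dots> = 2 ^ (\<Sum>C\<in>P. 3 * card C + 7)"
      by (simp add: power_sum)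
    also have "(\<Sum>C\<in>P. 3 * card C + 7) = 3 * card A + 7 * card P"
      using product_partition[OF part finC] by (simp add: sum.distrib sum_distrib_left)
    finally show ?thesis .
  qed
  ultimately show ?thesis
    by blast
qed

lemma Un_subset_Un_iff_separated:
  fixes a :: "'a::linorder"
  assumes "X \<subseteq> {..a}" "X' \<subseteq> {..a}" "Y \<subseteq> {a<..}" "Y' \<subseteq> {a<..}"
  shows "X \<union> Y \<subseteq> X' \<union> Y' \<longleftrightarrow> X \<subseteq> X' \<and> Y \<subseteq> Y'"
  using assms by (auto simp: subset_iff) (meson not_less)+

text \<open>A vector \<open>h \<le> g\<close> written in unary inside consecutive blocks of lengths \<open>g\<^sub>1, g\<^sub>2, \<dots>\<close>.\<close>
fun block_code :: "nat list \<Rightarrow> nat list \<Rightarrow> nat set" where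
  "block_code (a # g) (x # h) = {1..x} \<union> (\<lambda>j. j + a) ` block_code g h"
| "block_code _ _ = {}"

definition lists_below :: "nat list \<Rightarrow> nat list set" where
  "lists_below g = {h. list_all2 (\<le>) h g}"

lemma block_code_pos: "j \<in> block_code g h \<Longrightarrow> 1 \<le> j"
  by (induction g h arbitrary: j rule: block_code.induct) fastforce+

lemma block_code_subset: "h \<in> lists_below g \<Longrightarrow> block_code g h \<subseteq> {1..sum_list g}"
  unfolding lists_below_def
proof (induction g h rule: block_code.induct)
  case (1 a g x h)
  then have "x \<le> a" "block_code g h \<subseteq> {1..sum_list g}" by auto
  then show ?case by auto
qed auto

lemma block_code_subset_iff:
  assumes "h \<in> lists_below g" "h' \<in> lists_below g"
  shows "block_code g h \<subseteq> block_code g h' \<longleftrightarrow> list_all2 (\<le>) h h'"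
  using assms unfolding lists_below_def
proof (induction g arbitrary: h h')
  case Nil
  then show ?case by simp
next
  case (Cons a g)
  obtain x r where h: "h = x # r" and x: "x \<le> a" and r: "list_all2 (\<le>) r g"
    using Cons.prems(1) by (auto simp: list_all2_Cons2)
  obtain x' r' where h': "h' = x' # r'" and x': "x' \<le> a" and r': "list_all2 (\<le>) r' g"
    using Cons.prems(2) by (auto simp: list_all2_Cons2)
  have shifted: "(\<lambda>j. j + a) ` block_code g k \<subseteq> {a<..}" for k
    using block_code_pos by fastforce
  have "{1..x} \<subseteq> {..a}" "{1..x'} \<subseteq> {..a}"
    using x x' by auto
  then have "block_code (a # g) h \<subseteq> block_code (a # g) h' \<longleftrightarrow>
      {1..x} \<subseteq> {1..x'} \<and> (\<lambda>j. j + a) ` block_code g r \<subseteq> (\<lambda>j. j + a) ` block_code g r'"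
    unfolding h h' block_code.simps by (rule Un_subset_Un_iff_separated[OF _ _ shifted shifted])
  also have "\<dots> \<longleftrightarrow> x \<le> x' \<and> block_code g r \<subseteq> block_code g r'"
    by (auto simp: inj_image_subset_iff inj_def)
  also have "\<dots> \<longleftrightarrow> list_all2 (\<le>) h h'"
    using Cons.IH[of r r'] r r' unfolding h h' by simp
  finally show ?case .
qed

lemma lists_below_Cons: "lists_below (a # g) = (\<lambda>(x, h). x # h) ` ({..a} \<times> lists_below g)"
  unfolding lists_below_def by (auto simp: list_all2_Cons2 image_iff)

lemma lists_below_Nil: "lists_below [] = {[]}"
  unfolding lists_below_def by auto

lemma finite_lists_below: "finite (lists_below g)"
  by (induction g) (simp_all add: lists_below_Nil lists_below_Cons)

lemma card_lists_below: "card (lists_below g) = prod_list (map Suc g)"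
proof (induction g)
  case Nil
  then show ?case by (simp add: lists_below_Nil)
next
  case (Cons a g)
  have "inj_on (\<lambda>(x, h). x # h) ({..a} \<times> lists_below g)"
    by (auto simp: inj_on_def)
  then show ?case
    unfolding lists_below_Cons using Cons finite_lists_below
    by (simp add: card_image card_cartesian_product)
qed

text \<open>The sorted lists of piece sizes of the partitions used below; the last condition says
  \<open>\<Prod>(g\<^sub>i + 1) \<le> 2 ^ (2n/3)\<close>.\<close>
definition chain_types :: "nat \<Rightarrow> nat list set" where
  "chain_types n = {g. sorted g \<and> set g \<subseteq> {1..9} \<and> sum_list g \<le> n
                      \<and> prod_list (map Suc g) ^ 3 \<le> 2 ^ (2 * n)}"

lemma length_le_sum_list: "0 \<notin> set g \<Longrightarrow> length g \<le> sum_list (g::nat list)"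
  by (induction g) auto

text \<open>A sorted list is determined by its multiset, i.e. by the 9 multiplicities of \<open>1, \<dots>, 9\<close>.\<close>
lemma card_chain_types: "finite (chain_types n) \<and> card (chain_types n) \<le> (n + 1) ^ 9"
proof -
  define counts where "counts g = map (count_list g) [1..<10]" for g
  have inj: "inj_on counts (chain_types n)"
  proof (rule inj_onI)
    fix g g' assume g: "g \<in> chain_types n" and g': "g' \<in> chain_types n" and eq: "counts g = counts g'"
    have "count_list g v = count_list g' v" for v
    proof (cases "v \<in> {1..9}")
      case True
      then have "v \<in> set [1..<10]" by auto
      then show ?thesis using eq unfolding counts_def map_eq_conv by blast
    next
      case False
      then have "v \<notin> set g" "v \<notin> set g'"
        using g g' unfolding chain_types_def by auto
      then show ?thesis by (simp add: count_list_0_iff)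
    qed
    then have "mset g = mset g'"
      by (simp add: multiset_eq_iff count_mset)
    moreover have "sorted g" "sorted g'"
      using g g' unfolding chain_types_def by auto
    ultimately show "g = g'"
      by (metis sorted_sort_id sorted_list_of_multiset_mset)
  qed
  let ?vectors = "{xs. set xs \<subseteq> {0..n} \<and> length xs = 9}"
  have sub: "counts ` chain_types n \<subseteq> ?vectors"
  proof
    fix xs assume "xs \<in> counts ` chain_types n"
    then obtain g where g: "g \<in> chain_types n" "xs = counts g" by blast
    have "0 \<notin> set g" "sum_list g \<le> n"
      using g(1) unfolding chain_types_def by auto
    then have "count_list g v \<le> n" for v
      using length_le_sum_list[of g] count_le_length[of g v] by linarith
    then show "xs \<in> ?vectors"
      using g(2) unfolding counts_def by auto
  qed
  have fin: "finite ?vectors"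
    by (rule finite_lists_length_eq) simp
  have "card (counts ` chain_types n) \<le> card ?vectors"
    by (rule card_mono[OF fin sub])
  also have "card ?vectors = (n + 1) ^ 9"
    using card_lists_length_eq[of "{0..n}" 9] by simp
  finally have "card (counts ` chain_types n) \<le> (n + 1) ^ 9" .
  moreover have "finite (counts ` chain_types n)"
    by (rule finite_subset[OF sub fin])
  ultimately show ?thesis
    using inj by (simp add: card_image finite_image_iff)
qed

definition chain_family :: "nat \<Rightarrow> nat set set" where
  "chain_family n = (\<Union>g\<in>chain_types n. block_code g ` lists_below g)"

lemma chain_family_subset: "chain_family n \<subseteq> Pow {1..n}"
proof
  fix S assume "S \<in> chain_family n"
  then obtain g h where "g \<in> chain_types n" "h \<in> lists_below g" "S = block_code g h"
    unfolding chain_family_def by blast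
  then show "S \<in> Pow {1..n}"
    using block_code_subset[of h g] unfolding chain_types_def by auto
qed

lemma le_powr_of_cube_le:
  assumes "(p::nat) ^ 3 \<le> 2 ^ (2 * n)"
  shows "real p \<le> 2 powr (2/3 * real n)"
proof -
  have "(2 powr (2/3 * real n)) ^ 3 = 2 powr (2/3 * real n * 3)"
    by (simp add: powr_realpow[symmetric] powr_powr)
  also have "\<dots> = 2 ^ (2 * n)"
    by (simp add: powr_realpow[symmetric])
  finally have "real p ^ 3 \<le> (2 powr (2/3 * real n)) ^ 3"
    using assms by (metis of_nat_le_iff of_nat_numeral of_nat_power)
  then show ?thesis
    using power_mono_iff[of "real p" "2 powr (2/3 * real n)" 3] by simp
qed

lemma card_chain_family: "real (card (chain_family n)) \<le> real ((n + 1) ^ 9) * 2 powr (2/3 * real n)"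
proof -
  have fin: "finite (chain_types n)"
    using card_chain_types by blast
  have each: "real (card (block_code g ` lists_below g)) \<le> 2 powr (2/3 * real n)"
    if "g \<in> chain_types n" for g
  proof -
    have "card (block_code g ` lists_below g) \<le> prod_list (map Suc g)"
      using card_image_le[OF finite_lists_below] card_lists_below by metis
    then have "real (card (block_code g ` lists_below g)) \<le> real (prod_list (map Suc g))"
      by simp
    also have "\<dots> \<le> 2 powr (2/3 * real n)"
      using that le_powr_of_cube_le unfolding chain_types_def by blast
    finally show ?thesis .
  qed
  have "card (chain_family n) \<le> (\<Sum>g\<in>chain_types n. card (block_code g ` lists_below g))"
    unfolding chain_family_def by (rule card_UN_le[OF fin])
  then have "real (card (chain_family n)) \<le> (\<Sum>g\<in>chain_types n. real (card (block_code g ` lists_below g)))"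
    by (metis of_nat_le_iff of_nat_sum)
  also have "\<dots> \<le> real (card (chain_types n)) * 2 powr (2/3 * real n)"
    using sum_mono[OF each] by simp
  also have "\<dots> \<le> real ((n + 1) ^ 9) * 2 powr (2/3 * real n)"
    using card_chain_types by (intro mult_right_mono) (simp_all only: of_nat_le_iff, simp)
  finally show ?thesis .
qed

lemma chain_downsets_nested:
  assumes po: "is_poset A le" and p: "p \<subseteq> A" "Complete_Partial_Order.chain le p"
    and uv: "u \<in> A" "v \<in> A"
  shows "{z\<in>p. le z u} \<subseteq> {z\<in>p. le z v} \<or> {z\<in>p. le z v} \<subseteq> {z\<in>p. le z u}"
proof (rule ccontr)
  assume "\<not> ?thesis"
  then obtain a b where a: "a \<in> p" "le a u" "\<not> le a v" and b: "b \<in> p" "le b v" "\<not> le b u"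
    by blast
  have aA: "a \<in> A" and bA: "b \<in> A"
    using a(1) b(1) p(1) by auto
  show False
  proof (cases rule: chainE[OF p(2) a(1) b(1)])
    case 1
    then show False
      using is_poset_trans[OF po aA bA uv(2) _ b(2)] a(3) by blast
  next
    case 2
    then show False
      using is_poset_trans[OF po bA aA uv(1) _ a(2)] b(3) by blast
  qed
qed

lemma le_iff_chain_counts_le:
  assumes po: "is_poset A le" and fin: "finite A" and P: "chain_partition le A P"
    and xy: "x \<in> A" "y \<in> A"
  shows "le x y \<longleftrightarrow> (\<forall>p\<in>P. card {z\<in>p. le z x} \<le> card {z\<in>p. le z y})"
proof
  have pA: "p \<subseteq> A" if "p \<in> P" for p
    using P that unfolding chain_partition_def partition_on_def by blast
  have finp: "finite p" if "p \<in> P" for p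
    using finite_subset[OF pA[OF that] fin] .
  show "\<forall>p\<in>P. card {z\<in>p. le z x} \<le> card {z\<in>p. le z y}" if "le x y"
  proof
    fix p assume "p \<in> P"
    have "{z\<in>p. le z x} \<subseteq> {z\<in>p. le z y}"
      using is_poset_trans[OF po _ xy _ that] pA[OF \<open>p \<in> P\<close>] by blast
    then show "card {z\<in>p. le z x} \<le> card {z\<in>p. le z y}"
      using finp[OF \<open>p \<in> P\<close>] by (intro card_mono) auto
  qed
  assume counts: "\<forall>p\<in>P. card {z\<in>p. le z x} \<le> card {z\<in>p. le z y}"
  obtain p where p: "p \<in> P" "x \<in> p"
    using P xy(1) unfolding chain_partition_def partition_on_def by blast
  have chain: "Complete_Partial_Order.chain le p"
    using P p(1) unfolding chain_partition_def by blast
  have "{z\<in>p. le z x} \<subseteq> {z\<in>p. le z y}"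
  proof (cases "{z\<in>p. le z y} \<subseteq> {z\<in>p. le z x}")
    case True
    moreover have "card {z\<in>p. le z x} \<le> card {z\<in>p. le z y}"
      using counts p(1) by blast
    ultimately have "{z\<in>p. le z y} = {z\<in>p. le z x}"
      using finp[OF p(1)] by (intro card_seteq) auto
    then show ?thesis by simp
  next
    case False
    then show ?thesis
      using chain_downsets_nested[OF po pA[OF p(1)] chain xy] by blast
  qed
  then show "le x y"
    using p(2) is_poset_refl[OF po xy(1)] by blast
qed

lemma list_all2_map_map: "list_all2 R (map f xs) (map g xs) \<longleftrightarrow> (\<forall>x\<in>set xs. R (f x) (g x))"
  by (induction xs) auto

lemma card_list_in_chain_types:
  assumes fin: "finite A" and n: "card A = n" and part: "partition_on A P"
    and small: "\<forall>p\<in>P. card p \<le> 9" and prod: "(\<Prod>p\<in>P. card p + 1) ^ 3 \<le> (2::nat) ^ (2 * n)"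
    and ps: "set ps = P" "distinct ps" "sorted (map card ps)"
  shows "map card ps \<in> chain_types n"
  unfolding chain_types_def mem_Collect_eq
proof (intro conjI)
  have finp: "finite p" "p \<noteq> {}" if "p \<in> P" for p
    using part fin that unfolding partition_on_def by (auto intro: finite_subset)
  show "set (map card ps) \<subseteq> {1..9}"
    using ps(1) small finp by (auto simp: Suc_le_eq card_gt_0_iff)
  have "sum_list (map card ps) = (\<Sum>p\<in>P. card p)"
    using sum.distinct_set_conv_list[OF ps(2), of card] ps(1) by simp
  also have "\<dots> = n"
    using product_partition[OF part finp(1)] n by simp
  finally show "sum_list (map card ps) \<le> n" by simp
  have "prod_list (map Suc (map card ps)) = (\<Prod>p\<in>P. card p + 1)"
    using prod.distinct_set_conv_list[OF ps(2), of "\<lambda>p. card p + 1"] ps(1) by (simp add: comp_def)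
  then show "prod_list (map Suc (map card ps)) ^ 3 \<le> 2 ^ (2 * n)"
    using prod by simp
qed (rule ps(3))

lemma contains_poset_chain_family:
  assumes po: "is_poset A le" and fin: "finite A" and n: "card A = n"
    and P: "chain_partition le A P" and small: "\<forall>p\<in>P. card p \<le> 9"
    and prod: "(\<Prod>p\<in>P. card p + 1) ^ 3 \<le> (2::nat) ^ (2 * n)"
  shows "contains_poset (chain_family n) A le"
proof -
  have part: "partition_on A P"
    using P unfolding chain_partition_def by blast
  obtain ps0 where ps0: "set ps0 = P" "distinct ps0"
    using finite_distinct_list[OF finite_elements[OF fin part]] by blast
  define ps where "ps = sort_key card ps0"
  have ps: "set ps = P" "distinct ps" "sorted (map card ps)"
    unfolding ps_def using ps0 by (simp_all add: distinct_sort)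
  define g where "g = map card ps"
  define count where "count x = map (\<lambda>p. card {z\<in>p. le z x}) ps" for x
  have "g \<in> chain_types n"
    unfolding g_def by (rule card_list_in_chain_types[OF fin n part small prod ps])
  moreover have count_below: "count x \<in> lists_below g" for x
    unfolding lists_below_def count_def g_def mem_Collect_eq list_all2_map_map
    using ps(1) part fin unfolding partition_on_def by (auto intro: card_mono finite_subset)
  ultimately have "block_code g (count x) \<in> chain_family n" for x
    unfolding chain_family_def by blast
  moreover have "le x y \<longleftrightarrow> block_code g (count x) \<subseteq> block_code g (count y)"
    if "x \<in> A" "y \<in> A" for x y
    using le_iff_chain_counts_le[OF po fin P that] block_code_subset_iff[OF count_below count_below]
    unfolding count_def list_all2_map_map ps(1) by simp
  ultimately show ?thesis
    by (intro contains_posetI[OF po])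
qed

section \<open>The universal family\<close>

lemma contains_poset_Pow_wide:
  assumes po: "is_poset A le" and fin: "finite A" and n: "card A = n"
    and X: "X \<subseteq> A" "antichain_on le X" "n \<le> 3 * card X"
    and s: "n \<le> s * s" "2 \<le> s"
  shows "contains_poset (Pow {1..2 * n div 3 + 2 * s}) A le"
proof -
  have "card A - card X \<le> 2 * n div 3"
    using n X(3) by linarith
  have "card X \<le> s * s"
    using card_mono[OF fin X(1)] n s(1) by simp
  then have "contains_poset (Pow {1..card A - card X + 2 * s}) A le"
    by (rule contains_poset_Pow_large_antichain[OF po fin X(1,2) _ s(2)])
  then show ?thesis
    by (rule contains_poset_mono) (use \<open>card A - card X \<le> 2 * n div 3\<close> in auto)
qed

lemma cube_le_if_eighth_power_le:
  assumes "(q::nat) ^ 8 \<le> 2 ^ (3 * n + 7 * c)" "3 * c \<le> n"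
  shows "q ^ 3 \<le> 2 ^ (2 * n)"
proof -
  have "(q ^ 3) ^ 8 = (q ^ 8) ^ 3"
    by (simp flip: power_mult)
  also have "\<dots> \<le> (2 ^ (3 * n + 7 * c)) ^ 3"
    using assms(1) by (rule power_mono) simp
  also have "\<dots> \<le> 2 ^ (16 * n)"
    unfolding power_mult[symmetric] using assms(2) by (intro power_increasing) simp_all
  also have "\<dots> = (2 ^ (2 * n)) ^ 8"
    by (simp flip: power_mult)
  finally show ?thesis
    using power_mono_iff[of "q ^ 3" "2 ^ (2 * n)" 8] by simp
qed

lemma contains_poset_chain_family_narrow:
  assumes po: "is_poset A le" and fin: "finite A" and n: "card A = n"
    and P: "chain_partition le A P" "3 * card P \<le> n"
  shows "contains_poset (chain_family n) A le"
proof -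
  obtain Q where Q: "chain_partition le A Q" "\<forall>q\<in>Q. card q \<le> 9"
      "(\<Prod>q\<in>Q. card q + 1) ^ 8 \<le> (2::nat) ^ (3 * n + 7 * card P)"
    using refine_chain_partition[OF P(1) fin] n by blast
  show ?thesis
    by (rule contains_poset_chain_family[OF po fin n Q(1,2) cube_le_if_eighth_power_le[OF Q(3) P(2)]])
qed

definition universal_family :: "nat \<Rightarrow> nat \<Rightarrow> nat set set" where
  "universal_family n s = Pow {1..min (2 * n div 3 + 2 * s) n} \<union> chain_family n"

lemma universal_family_subset: "universal_family n s \<subseteq> Pow {1..n}"
  using chain_family_subset unfolding universal_family_def by auto

lemma contains_poset_universal:
  assumes po: "is_poset A le" and fin: "finite A" and n: "card A = n"
    and s: "n \<le> s * s" "1 \<le> s"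
  shows "contains_poset (universal_family n s) A le"
proof (cases "n \<le> 2 * n div 3 + 2 * s")
  case True
  then have "contains_poset (Pow {1..min (2 * n div 3 + 2 * s) n}) A le"
    using contains_poset_Pow_card[OF po fin] n by simp
  then show ?thesis
    by (rule contains_poset_mono) (auto simp: universal_family_def)
next
  case False
  obtain P X where P: "chain_partition le A P" and X: "X \<subseteq> A" "antichain_on le X"
    and PX: "card P \<le> card X"
    using dilworth[OF fin po] by blast
  show ?thesis
  proof (cases "n \<le> 3 * card X")
    case True
    have "2 \<le> s"
      using False s by (cases "s = 1") auto
    then have "contains_poset (Pow {1..2 * n div 3 + 2 * s}) A le"
      using contains_poset_Pow_wide[OF po fin n X True s(1)] by blast
    then show ?thesis
      by (rule contains_poset_mono) (use False in \<open>auto simp: universal_family_def\<close>)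
  next
    case False
    then have "contains_poset (chain_family n) A le"
      using contains_poset_chain_family_narrow[OF po fin n P] PX by simp
    then show ?thesis
      by (rule contains_poset_mono) (auto simp: universal_family_def)
  qed
qed

lemma sq_le_four_pow: "s * s + 1 \<le> (4::nat) ^ s"
proof (induction s)
  case (Suc s)
  have "Suc s * Suc s + 1 \<le> 4 * (s * s + 1)"
    by (cases s) simp_all
  also have "\<dots> \<le> 4 * 4 ^ s"
    using Suc by simp
  finally show ?case by simp
qed simp

lemma ceil_sqrt_bounds:
  assumes "1 \<le> n" "s = nat \<lceil>sqrt (real n)\<rceil>"
  shows "n \<le> s * s" "real s \<le> sqrt (real n) + 1" "1 \<le> s"
proof -
  have "sqrt (real n) \<le> real s"
    using assms(2) by (simp add: real_nat_ceiling_ge)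
  then have "sqrt (real n) * sqrt (real n) \<le> real s * real s"
    by (intro mult_mono) auto
  then show "n \<le> s * s"
    by (simp flip: of_nat_mult)
  show "real s \<le> sqrt (real n) + 1"
    using assms(2) by (simp add: of_nat_nat ceiling_le_iff)
  have "0 < sqrt (real n)"
    using assms(1) by simp
  then show "1 \<le> s"
    using assms(2) by linarith
qed

lemma two_pow_min_le: "(2::real) ^ min (2 * n div 3 + 2 * s) n \<le> 2 powr (2/3 * real n) * 2 ^ (18 * s)"
proof -
  have "real (2 * n div 3) \<le> 2/3 * real n"
    by linarith
  have "(2::real) ^ min (2 * n div 3 + 2 * s) n \<le> 2 ^ (2 * n div 3 + 2 * s)"
    by (intro power_increasing) auto
  also have "\<dots> = 2 powr real (2 * n div 3) * 2 ^ (2 * s)"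
    by (simp add: power_add powr_realpow)
  also have "\<dots> \<le> 2 powr (2/3 * real n) * 2 ^ (18 * s)"
    using \<open>real (2 * n div 3) \<le> 2/3 * real n\<close> by (intro mult_mono power_increasing) auto
  finally show ?thesis .
qed

lemma Suc_pow_nine_le: "n \<le> s * s \<Longrightarrow> (n + 1) ^ 9 \<le> (2::nat) ^ (18 * s)"
proof -
  assume "n \<le> s * s"
  then have "n + 1 \<le> 4 ^ s"
    using sq_le_four_pow[of s] by linarith
  then have "(n + 1) ^ 9 \<le> ((4::nat) ^ s) ^ 9"
    by (rule power_mono) simp
  also have "\<dots> = ((2 ^ 2) ^ s) ^ 9"
    by simp
  also have "\<dots> = 2 ^ (18 * s)"
    by (simp only: power_mult[symmetric]) simp
  finally show ?thesis .
qed

lemma card_universal_family: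
  assumes n: "1 \<le> n" and s: "s = nat \<lceil>sqrt (real n)\<rceil>"
  shows "real (card (universal_family n s)) \<le> 2 powr (2/3 * real n + 37 * sqrt (real n))"
proof -
  note s_bounds = ceil_sqrt_bounds[OF n s]
  define E where "E = 2 powr (2/3 * real n)"
  have "real ((n + 1) ^ 9) \<le> 2 ^ (18 * s)"
    using Suc_pow_nine_le[OF s_bounds(1)] by (metis of_nat_le_iff of_nat_numeral of_nat_power)
  then have "real (card (chain_family n)) \<le> 2 ^ (18 * s) * E"
    using card_chain_family[of n] unfolding E_def
    by (meson mult_right_mono order_trans powr_ge_zero)
  moreover have "real (card (Pow {1..min (2 * n div 3 + 2 * s) n})) \<le> E * 2 ^ (18 * s)"
    using two_pow_min_le[of n s] unfolding E_def by (simp add: card_Pow)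
  moreover have "real (card (Pow {1..min (2 * n div 3 + 2 * s) n} \<union> chain_family n))
      \<le> real (card (Pow {1..min (2 * n div 3 + 2 * s) n})) + real (card (chain_family n))"
    using card_Un_le of_nat_mono by fastforce
  ultimately have "real (card (Pow {1..min (2 * n div 3 + 2 * s) n} \<union> chain_family n))
      \<le> E * 2 ^ (18 * s + 1)"
    by (simp add: mult.commute)
  also have "\<dots> = 2 powr (2/3 * real n + real (18 * s + 1))"
    using powr_realpow[of 2 "18 * s + 1"] unfolding E_def by (simp add: powr_add)
  also have "\<dots> \<le> 2 powr (2/3 * real n + 37 * sqrt (real n))"
  proof -
    have "1 \<le> sqrt (real n)"
      using n by simp
    moreover have "real (18 * s + 1) = 18 * real s + 1"
      by simp
    ultimately have "real (18 * s + 1) \<le> 37 * sqrt (real n)"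
      using s_bounds(2) by linarith
    then show ?thesis
      by simp
  qed
  finally show ?thesis
    unfolding universal_family_def .
qed

theorem theorem1p1:
  shows "\<exists>C::real. C > 0 \<and>
    (\<forall>n::nat. n \<ge> 1 \<longrightarrow>
      (\<exists>P \<subseteq> Pow {1..n}.
         real (card P) \<le> 2 powr (2/3 * real n + C * sqrt (real n)) \<and>
         (\<forall>(A::nat set) le. card A = n \<and> is_poset A le \<longrightarrow> contains_poset P A le)))"
proof (intro exI[of _ 37] conjI allI impI)
  fix n :: nat assume n: "n \<ge> 1"
  define s where "s = nat \<lceil>sqrt (real n)\<rceil>"
  have "real (card (universal_family n s)) \<le> 2 powr (2/3 * real n + 37 * sqrt (real n))"
    by (rule card_universal_family[OF n s_def])
  moreover have "contains_poset (universal_family n s) A le"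
    if "card A = n" "is_poset A le" for A :: "nat set" and le
  proof (rule contains_poset_universal[OF that(2) _ that(1)])
    show "finite A"
      using that(1) n card.infinite by force
  qed (use ceil_sqrt_bounds[OF n s_def] in auto)
  ultimately show "\<exists>P\<subseteq>Pow {1..n}. real (card P) \<le> 2 powr (2/3 * real n + 37 * sqrt (real n)) \<and>
      (\<forall>(A::nat set) le. card A = n \<and> is_poset A le \<longrightarrow> contains_poset P A le)"
    using universal_family_subset by blast
qed simp

end
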